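(* There is a context-free language $L$ such that ${\rm pssr}(L)$ is not context-free; for instance $L=\{0^m1^m2^n3^n : m,n\ge1\}$.
   Context: For words $x=a_1\cdots a_n$, $y=b_1\cdots b_n$ of the same length, the perfect shuffle is $x\,\text{sh}\,y=a_1b_1a_2b_2\cdots a_nb_n$. $x^R$ denotes the reversal of $x$. For a language $L$, ${\rm pssr}(L)=\{x\,\text{sh}\,x^R : x\in L\}$. *)

theory Defs
  imports Main
begin

datatype ('n, 't) sym = NT 'n | Tm 't

type_synonym ('n, 't) prods = "('n \<times> ('n, 't) sym list) set"

inductive derives1 :: "('n, 't) prods \<Rightarrow> ('n, 't) sym list \<Rightarrow> ('n, 't) sym list \<Rightarrow> bool"
  for P where
  step: "(A, w) \<in> P \<Longrightarrow> derives1 P (l @ [NT A] @ r) (l @ w @ r)"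

definition derives :: "('n, 't) prods \<Rightarrow> ('n, 't) sym list \<Rightarrow> ('n, 't) sym list \<Rightarrow> bool" where
  "derives P = (derives1 P)\<^sup>*\<^sup>*"

definition Lang :: "('n, 't) prods \<Rightarrow> 'n \<Rightarrow> 't list set" where
  "Lang P S = {w. derives P [NT S] (map Tm w)}"

text \<open>A language is context-free if it is generated by a finite grammar
  (nonterminals w.l.o.g. natural numbers).\<close>
definition CFL :: "'t list set \<Rightarrow> bool" where
  "CFL L \<longleftrightarrow> (\<exists>(P :: (nat, 't) prods) S. finite P \<and> L = Lang P S)"

fun perfect_shuffle :: "'a list \<Rightarrow> 'a list \<Rightarrow> 'a list" where
  "perfect_shuffle (a # x) (b # y) = a # b # perfect_shuffle x y"
| "perfect_shuffle _ _ = []"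

definition pssr :: "'a list set \<Rightarrow> 'a list set" where
  "pssr L = {perfect_shuffle x (rev x) | x. x \<in> L}"

definition L7 :: "nat list set" where
  "L7 = {replicate m 0 @ replicate m 1 @ replicate n 2 @ replicate n 3 | m n. m \<ge> 1 \<and> n \<ge> 1}"

end

theory Submission
  imports Defs
begin

(* Finally, the word witness N = x sh x^R for x = 0^N 1^N 2^N 3^N is a palindrome
   whose middle half flips phase at its centre.  Any pumping-down u w y of it that
   lies in pssr(L7) must be a palindrome with balanced letter counts; a short window
   v w x inside one region breaks the counts, and a window across a region boundary
   forces a periodicity incompatible with the phase flip. *)

(* gen P alpha w s: the sentential form alpha derives the terminal word w by a
   derivation forest with s nonterminal expansions.  The size s is what makes
   the later descents well-founded. *)
inductive gen :: "('n, 't) prods \<Rightarrow> ('n, 't) sym list \<Rightarrow> 't list \<Rightarrow> nat \<Rightarrow> bool"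
  for P where
  nil: "gen P [] [] 0"
| tm: "gen P \<alpha> w s \<Longrightarrow> gen P (Tm a # \<alpha>) (a # w) s"
| nt: "(A, \<gamma>) \<in> P \<Longrightarrow> gen P \<gamma> u s1 \<Longrightarrow> gen P \<alpha> v s2 \<Longrightarrow>
       gen P (NT A # \<alpha>) (u @ v) (Suc (s1 + s2))"

lemma gen_Nil [simp]: "gen P [] z s \<longleftrightarrow> z = [] \<and> s = 0"
  by (auto elim: gen.cases intro: gen.intros)

lemma gen_Tm [simp]: "gen P (Tm a # \<alpha>) z s \<longleftrightarrow> (\<exists>w. z = a # w \<and> gen P \<alpha> w s)"
  by (auto elim: gen.cases intro: gen.intros)

lemma gen_NT:
  "gen P (NT A # \<alpha>) z s \<longleftrightarrow>
   (\<exists>\<gamma> u v s1 s2. (A, \<gamma>) \<in> P \<and> gen P \<gamma> u s1 \<and> gen P \<alpha> v s2 \<and> z = u @ v \<and> s = Suc (s1 + s2))"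
  by (rule iffI, erule gen.cases, blast+, auto intro: gen.intros)

lemma gen_single:
  "gen P [NT A] z s \<longleftrightarrow> (\<exists>\<gamma> s1. (A, \<gamma>) \<in> P \<and> gen P \<gamma> z s1 \<and> s = Suc s1)"
  by (auto simp: gen_NT)

lemma gen_append_intro:
  assumes "gen P \<alpha> z s" and "gen P \<beta> z' s'"
  shows "gen P (\<alpha> @ \<beta>) (z @ z') (s + s')"
  using assms(1)
proof (induction rule: gen.induct)
  case (nt A \<gamma> u s1 \<alpha> v s2)
  from gen.nt[OF nt.hyps(1,2) nt.IH(2)] show ?case
    by (simp add: add.assoc)
qed (simp_all add: assms(2))

lemma gen_append_elim:
  "gen P (\<alpha> @ \<beta>) z s \<Longrightarrow>
   \<exists>z1 z2 s1 s2. gen P \<alpha> z1 s1 \<and> gen P \<beta> z2 s2 \<and> z = z1 @ z2 \<and> s = s1 + s2"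
proof (induction \<alpha> arbitrary: z s)
  case (Cons x \<alpha>)
  show ?case
  proof (cases x)
    case (NT A)
    with Cons.prems obtain \<gamma> u v s1 s2 where
      "(A, \<gamma>) \<in> P" "gen P \<gamma> u s1" "gen P (\<alpha> @ \<beta>) v s2" "z = u @ v" "s = Suc (s1 + s2)"
      by (auto simp: gen_NT)
    moreover from Cons.IH[OF \<open>gen P (\<alpha> @ \<beta>) v s2\<close>] obtain v1 v2 t1 t2 where
      "gen P \<alpha> v1 t1" "gen P \<beta> v2 t2" "v = v1 @ v2" "s2 = t1 + t2"
      by blast
    ultimately have "gen P (x # \<alpha>) (u @ v1) (Suc (s1 + t1))" "gen P \<beta> v2 t2"
      "z = (u @ v1) @ v2" "s = Suc (s1 + t1) + t2"
      unfolding NT by (auto intro: gen.nt)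
    then show ?thesis by blast
  next
    case (Tm a)
    with Cons.prems obtain w where "gen P (\<alpha> @ \<beta>) w s" "z = a # w"
      by auto
    moreover from Cons.IH[OF \<open>gen P (\<alpha> @ \<beta>) w s\<close>] obtain w1 w2 t1 t2 where
      "gen P \<alpha> w1 t1" "gen P \<beta> w2 t2" "w = w1 @ w2" "s = t1 + t2"
      by blast
    ultimately show ?thesis
      unfolding Tm by (intro exI[of _ "a # w1"] exI[of _ w2] exI[of _ t1] exI[of _ t2]) auto
  qed
qed simp

lemma derives1_ctx: "derives1 P \<alpha> \<beta> \<Longrightarrow> derives1 P (l @ \<alpha> @ r) (l @ \<beta> @ r)"
proof (induction rule: derives1.induct)
  case (step A w l' r')
  from derives1.step[OF step, of "l @ l'" "r' @ r"] show ?case by simp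
qed

lemma derives_ctx: "derives P \<alpha> \<beta> \<Longrightarrow> derives P (l @ \<alpha> @ r) (l @ \<beta> @ r)"
  unfolding derives_def
  by (induction rule: rtranclp_induct) (auto intro: rtranclp.rtrancl_into_rtrancl derives1_ctx)

lemma derives_trans [trans]: "derives P \<alpha> \<beta> \<Longrightarrow> derives P \<beta> \<gamma> \<Longrightarrow> derives P \<alpha> \<gamma>"
  unfolding derives_def by (rule rtranclp_trans)

lemma gen_derives: "gen P \<alpha> z s \<Longrightarrow> derives P \<alpha> (map Tm z)"
proof (induction rule: gen.induct)
  case nil
  then show ?case by (simp add: derives_def)
next
  case (tm \<alpha> w s a)
  then show ?case using derives_ctx[OF tm.IH, of "[Tm a]" "[]"] by simp
next
  case (nt A \<gamma> u s1 \<alpha> v s2)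
  have "derives P (NT A # \<alpha>) (\<gamma> @ \<alpha>)"
    using derives1.step[OF nt.hyps(1), of "[]" \<alpha>] by (simp add: derives_def)
  also have "derives P (\<gamma> @ \<alpha>) (map Tm u @ \<alpha>)"
    using derives_ctx[OF nt.IH(1), of "[]" \<alpha>] by simp
  also have "derives P (map Tm u @ \<alpha>) (map Tm u @ map Tm v)"
    using derives_ctx[OF nt.IH(2), of "map Tm u" "[]"] by simp
  finally show ?case by simp
qed

lemma derives_gen: "derives P \<alpha> (map Tm z) \<Longrightarrow> \<exists>s. gen P \<alpha> z s"
  unfolding derives_def
proof (induction rule: converse_rtranclp_induct)
  case base
  have "gen P (map Tm z) z 0" by (induction z) (auto intro: gen.intros)
  then show ?case by blast
next
  case (step \<alpha> \<beta>)
  from step.hyps(1) obtain A \<gamma> l r where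
    rule: "(A, \<gamma>) \<in> P" and "\<alpha> = l @ [NT A] @ r" "\<beta> = l @ \<gamma> @ r"
    by (auto elim: derives1.cases)
  from step.IH obtain s where "gen P (l @ \<gamma> @ r) z s" using \<open>\<beta> = _\<close> by blast
  then obtain z1 z2 z3 s1 s2 s3 where
    "gen P l z1 s1" "gen P \<gamma> z2 s2" "gen P r z3 s3" "z = z1 @ z2 @ z3"
    by (blast dest: gen_append_elim)
  moreover have "gen P ([NT A] @ r) (z2 @ z3) (Suc (s2 + s3))"
    using gen.nt[OF rule \<open>gen P \<gamma> z2 s2\<close> \<open>gen P r z3 s3\<close>] by simp
  with \<open>gen P l z1 s1\<close> have "gen P (l @ [NT A] @ r) (z1 @ z2 @ z3) (s1 + Suc (s2 + s3))"
    by (rule gen_append_intro)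
  then show ?case using \<open>\<alpha> = _\<close> \<open>z = _\<close> by blast
qed

lemma Lang_gen: "Lang P S = {z. \<exists>s. gen P [NT S] z s}"
  unfolding Lang_def using gen_derives derives_gen by blast

(* This semantic notion of a
   "context around an occurrence of B" is all the pumping argument needs. *)
definition ctx ::
  "('n, 't) prods \<Rightarrow> ('n, 't) sym list \<Rightarrow> 't list \<Rightarrow> 'n \<Rightarrow> 't list \<Rightarrow> nat \<Rightarrow> bool" where
  "ctx P \<alpha> u B y c \<longleftrightarrow> (\<forall>w t. gen P [NT B] w t \<longrightarrow> gen P \<alpha> (u @ w @ y) (t + c))"

definition subderiv ::
  "('n, 't) prods \<Rightarrow> ('n, 't) sym list \<Rightarrow> 't list \<Rightarrow> nat \<Rightarrow> 'n \<Rightarrow> 't list \<Rightarrow> nat \<Rightarrow> bool" where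
  "subderiv P \<alpha> z s B w t \<longleftrightarrow>
     gen P [NT B] w t \<and> (\<exists>u y c. z = u @ w @ y \<and> s = t + c \<and> ctx P \<alpha> u B y c)"

lemma subderiv_refl: "gen P [NT A] z s \<Longrightarrow> subderiv P [NT A] z s A z s"
  unfolding subderiv_def ctx_def by (intro conjI exI[of _ "[]"] exI[of _ 0]) simp_all

lemma subderiv_trans:
  assumes "subderiv P \<alpha> z s B w t" and "subderiv P [NT B] w t C v r"
  shows "subderiv P \<alpha> z s C v r"
proof -
  from assms(1) obtain u y c where
    z: "z = u @ w @ y" "s = t + c" and outer: "ctx P \<alpha> u B y c"
    unfolding subderiv_def by blast
  from assms(2) obtain u' y' c' where
    w: "w = u' @ v @ y'" "t = r + c'" and inner: "ctx P [NT B] u' C y' c'" and "gen P [NT C] v r"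
    unfolding subderiv_def by blast
  have "ctx P \<alpha> (u @ u') C (y' @ y) (c' + c)"
    unfolding ctx_def
  proof (intro allI impI)
    fix v0 t0
    assume "gen P [NT C] v0 t0"
    then have "gen P [NT B] (u' @ v0 @ y') (t0 + c')"
      using inner by (simp add: ctx_def)
    then have "gen P \<alpha> (u @ (u' @ v0 @ y') @ y) (t0 + c' + c)"
      using outer unfolding ctx_def by blast
    then show "gen P \<alpha> ((u @ u') @ v0 @ y' @ y) (t0 + (c' + c))"
      by (simp add: add.assoc)
  qed
  with z w \<open>gen P [NT C] v r\<close> show ?thesis
    unfolding subderiv_def by (intro conjI exI[of _ "u @ u'"] exI[of _ "y' @ y"]) auto
qed

lemma subderiv_le: "subderiv P \<alpha> z s B w t \<Longrightarrow> t \<le> s \<and> length w \<le> length z"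
  unfolding subderiv_def by auto

lemma subderiv_append_left:
  assumes "subderiv P \<alpha> z s B w t" and "gen P \<beta> z' s'"
  shows "subderiv P (\<alpha> @ \<beta>) (z @ z') (s + s') B w t"
proof -
  from assms(1) obtain u y c where
    "gen P [NT B] w t" "z = u @ w @ y" "s = t + c" and outer: "ctx P \<alpha> u B y c"
    unfolding subderiv_def by blast
  moreover have "ctx P (\<alpha> @ \<beta>) u B (y @ z') (c + s')"
    unfolding ctx_def
  proof (intro allI impI)
    fix v r
    assume "gen P [NT B] v r"
    with outer have "gen P \<alpha> (u @ v @ y) (r + c)" unfolding ctx_def by blast
    from gen_append_intro[OF this assms(2)]
    show "gen P (\<alpha> @ \<beta>) (u @ v @ y @ z') (r + (c + s'))" by (simp add: add.assoc)
  qed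
  ultimately show ?thesis
    unfolding subderiv_def by (intro conjI exI[of _ u] exI[of _ "y @ z'"]) auto
qed

lemma subderiv_append_right:
  assumes "gen P \<alpha> z' s'" and "subderiv P \<beta> z s B w t"
  shows "subderiv P (\<alpha> @ \<beta>) (z' @ z) (s' + s) B w t"
proof -
  from assms(2) obtain u y c where
    "gen P [NT B] w t" "z = u @ w @ y" "s = t + c" and outer: "ctx P \<beta> u B y c"
    unfolding subderiv_def by blast
  moreover have "ctx P (\<alpha> @ \<beta>) (z' @ u) B y (s' + c)"
    unfolding ctx_def
  proof (intro allI impI)
    fix v r
    assume "gen P [NT B] v r"
    with outer have "gen P \<beta> (u @ v @ y) (r + c)" unfolding ctx_def by blast
    from gen_append_intro[OF assms(1) this]
    show "gen P (\<alpha> @ \<beta>) ((z' @ u) @ v @ y) (r + (s' + c))" by (simp add: ac_simps)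
  qed
  ultimately show ?thesis
    unfolding subderiv_def by (intro conjI exI[of _ "z' @ u"] exI[of _ y]) auto
qed

lemma subderiv_rule:
  assumes "(A, \<gamma>) \<in> P" and "subderiv P \<gamma> z s B w t"
  shows "subderiv P [NT A] z (Suc s) B w t"
proof -
  from assms(2) obtain u y c where
    "gen P [NT B] w t" "z = u @ w @ y" "s = t + c" and outer: "ctx P \<gamma> u B y c"
    unfolding subderiv_def by blast
  moreover have "ctx P [NT A] u B y (Suc c)"
    using outer gen.nt[OF assms(1) _ gen.nil] unfolding ctx_def by fastforce
  ultimately show ?thesis
    unfolding subderiv_def by (intro conjI exI[of _ u] exI[of _ y]) auto
qed

lemma subderiv_excise:
  assumes "subderiv P \<alpha> z s B w t" and "subderiv P [NT B] w t B w' t'" and "t' < t"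
  shows "\<exists>u v x y s'. z = u @ v @ w' @ x @ y \<and> w = v @ w' @ x \<and> gen P \<alpha> (u @ w' @ y) s' \<and> s' < s"
proof -
  from assms(1) obtain u y c where "z = u @ w @ y" "s = t + c" and outer: "ctx P \<alpha> u B y c"
    unfolding subderiv_def by blast
  moreover from assms(2) obtain v x where "w = v @ w' @ x" and "gen P [NT B] w' t'"
    unfolding subderiv_def by blast
  moreover from outer \<open>gen P [NT B] w' t'\<close> have "gen P \<alpha> (u @ w' @ y) (t' + c)"
    unfolding ctx_def by blast
  ultimately show ?thesis
    using assms(3) by (intro exI[of _ u] exI[of _ v] exI[of _ x] exI[of _ y] exI[of _ "t' + c"]) auto
qed

lemma long_child:
  assumes "gen P \<gamma> z s" and "1 \<le> K" and "length \<gamma> * K < length z"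
  shows "\<exists>B w t. subderiv P \<gamma> z s B w t \<and> K < length w"
  using assms(1,3)
proof (induction rule: gen.induct)
  case nil
  then show ?case by simp
next
  case (tm \<alpha> w s a)
  with assms(2) have "length \<alpha> * K < length w" by simp
  with tm.IH obtain B v t where "subderiv P \<alpha> w s B v t" "K < length v" by blast
  moreover have "gen P [Tm a] [a] 0" by (simp add: gen.nil)
  ultimately show ?case
    using subderiv_append_right[of P "[Tm a]" "[a]" 0 \<alpha> w s B v t] by auto
next
  case (nt A \<gamma> u s1 \<alpha> v s2)
  have root: "gen P [NT A] u (Suc s1)"
    using gen.nt[OF nt.hyps(1,2) gen.nil] by simp
  show ?case
  proof (cases "K < length u")
    case True
    with subderiv_append_left[OF subderiv_refl[OF root] nt.hyps(3)] show ?thesis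
      by auto
  next
    case False
    with nt.prems have "length \<alpha> * K < length v" by (simp add: algebra_simps)
    with nt.IH(2) obtain B w t where "subderiv P \<alpha> v s2 B w t" "K < length w" by blast
    with subderiv_append_right[OF root] show ?thesis
      by fastforce
  qed
qed

definition max_rhs :: "('n, 't) prods \<Rightarrow> nat" where
  "max_rhs P = Max (insert 1 ((\<lambda>(A, \<gamma>). length \<gamma>) ` P))"

lemma max_rhs_ge_1: "finite P \<Longrightarrow> 1 \<le> max_rhs P"
  unfolding max_rhs_def by simp

lemma length_rhs_le_max_rhs: "finite P \<Longrightarrow> (A, \<gamma>) \<in> P \<Longrightarrow> length \<gamma> \<le> max_rhs P"
  unfolding max_rhs_def by (rule Max_ge) force+

lemma long_subtree:
  assumes "finite P" and "gen P [NT A] z s" and "1 \<le> K" and "max_rhs P * K < length z"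
  shows "\<exists>B w t. subderiv P [NT A] z s B w t \<and> K < length w \<and> t < s"
proof -
  from assms(2) obtain \<gamma> s1 where rule: "(A, \<gamma>) \<in> P" and "gen P \<gamma> z s1" "s = Suc s1"
    by (auto simp: gen_single)
  moreover have "length \<gamma> * K < length z"
    using length_rhs_le_max_rhs[OF assms(1) rule] assms(4) by (meson le_less_trans mult_le_mono1)
  ultimately obtain B w t where "subderiv P \<gamma> z s1 B w t" "K < length w"
    using long_child assms(3) by blast
  with subderiv_rule[OF rule] subderiv_le \<open>s = Suc s1\<close> show ?thesis
    by (metis le_imp_less_Suc)
qed

lemma medium_subtree:
  assumes "finite P" and "1 \<le> K"
  shows "gen P [NT A] z s \<Longrightarrow> K < length z \<Longrightarrow>
    \<exists>B w t. subderiv P [NT A] z s B w t \<and> K < length w \<and> length w \<le> max_rhs P * K"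
proof (induction s arbitrary: A z rule: less_induct)
  case (less s)
  show ?case
  proof (cases "length z \<le> max_rhs P * K")
    case True
    with less.prems subderiv_refl[OF less.prems(1)] show ?thesis by blast
  next
    case False
    then obtain C v r where down: "subderiv P [NT A] z s C v r" "K < length v" "r < s"
      using long_subtree[OF assms(1) less.prems(1) assms(2)] by auto
    moreover from down have "gen P [NT C] v r"
      unfolding subderiv_def by blast
    ultimately obtain B w t where
      "subderiv P [NT C] v r B w t" "K < length w" "length w \<le> max_rhs P * K"
      using less.IH by blast
    with down(1) show ?thesis
      by (blast intro: subderiv_trans)
  qed
qed

lemma gen_lhs: "gen P [NT A] z s \<Longrightarrow> A \<in> fst ` P"
  by (force simp: gen_single)

(* Descending i times keeps
   yields longer than max_rhs ^ i; if M lists nonterminals already seen and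
   |M| + i covers all nonterminals, the chain either reaches a member of M or
   repeats a nonterminal with strictly decreasing size. *)
lemma repetition:
  assumes "finite P"
  shows "M \<subseteq> fst ` P \<Longrightarrow> card (fst ` P) \<le> card M + i \<Longrightarrow> gen P [NT A] z s \<Longrightarrow>
    max_rhs P ^ i < length z \<Longrightarrow>
    (\<exists>B\<in>M. \<exists>w t. subderiv P [NT A] z s B w t) \<or>
    (\<exists>B w t w' t'. subderiv P [NT A] z s B w t \<and> subderiv P [NT B] w t B w' t' \<and> t' < t)"
proof (induction i arbitrary: M A z s)
  case 0
  have "M = fst ` P"
    using card_seteq[OF finite_imageI[OF assms] "0.prems"(1)] "0.prems"(2) by simp
  with gen_lhs[OF "0.prems"(3)] subderiv_refl[OF "0.prems"(3)] show ?case by blast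
next
  case (Suc i)
  show ?case
  proof (cases "A \<in> M")
    case True
    with subderiv_refl[OF Suc.prems(3)] show ?thesis by blast
  next
    case False
    have "1 \<le> max_rhs P ^ i"
      using max_rhs_ge_1[OF assms] by simp
    moreover have "max_rhs P * max_rhs P ^ i < length z"
      using Suc.prems(4) by simp
    ultimately obtain C v r where
      down: "subderiv P [NT A] z s C v r" "max_rhs P ^ i < length v" "r < s"
      using long_subtree[OF assms Suc.prems(3)] by blast
    have "insert A M \<subseteq> fst ` P"
      using gen_lhs[OF Suc.prems(3)] Suc.prems(1) by blast
    moreover have "finite M"
      using Suc.prems(1) assms finite_subset by blast
    with Suc.prems(2) False have "card (fst ` P) \<le> card (insert A M) + i"
      by simp
    moreover have "gen P [NT C] v r"
      using down(1) unfolding subderiv_def by blast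
    ultimately have "(\<exists>B\<in>insert A M. \<exists>w t. subderiv P [NT C] v r B w t) \<or>
      (\<exists>B w t w' t'. subderiv P [NT C] v r B w t \<and> subderiv P [NT B] w t B w' t' \<and> t' < t)"
      using down(2) by (rule Suc.IH)
    then consider
        B w t where "B \<in> insert A M" "subderiv P [NT C] v r B w t"
      | B w t w' t' where "subderiv P [NT C] v r B w t" "subderiv P [NT B] w t B w' t'" "t' < t"
      by blast
    then show ?thesis
    proof cases
      case (1 B w t)
      have below: "subderiv P [NT A] z s B w t"
        using subderiv_trans[OF down(1) 1(2)] .
      moreover have "t < s"
        using subderiv_le[OF 1(2)] down(3) by simp
      txt \<open>Either B was seen before, or B = A repeats the root.\<close>
      ultimately show ?thesis
        using 1(1) subderiv_refl[OF Suc.prems(3)] by blast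
    next
      case (2 B w t w' t')
      with down(1) show ?thesis
        by (blast intro: subderiv_trans)
    qed
  qed
qed

(* The core of the pumping lemma: a minimal derivation of a long word z contains a
   subderivation of length at most max_rhs * K (K = max_rhs ^ #nonterminals) with a
   repetition inside it; excising the repetition shrinks the derivation, so by
   minimality the excised parts v, x are not both empty. *)
lemma pumping_decomposition:
  assumes "finite P" and gen_z: "gen P [NT S] z s"
    and minimal: "\<And>s'. s' < s \<Longrightarrow> \<not> gen P [NT S] z s'"
    and long: "max_rhs P ^ Suc (card (fst ` P)) < length z"
  shows "\<exists>u v w x y s'. z = u @ v @ w @ x @ y \<and> v @ x \<noteq> [] \<and>
    length (v @ w @ x) \<le> max_rhs P ^ Suc (card (fst ` P)) \<and> gen P [NT S] (u @ w @ y) s'"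
proof -
  define K where "K = max_rhs P ^ card (fst ` P)"
  have "1 \<le> K" and "K \<le> max_rhs P * K"
    unfolding K_def using max_rhs_ge_1[OF assms(1)] by simp_all
  moreover from long have "max_rhs P * K < length z"
    by (simp add: K_def)
  ultimately have "K < length z"
    by linarith
  then obtain B0 w0 t0 where top: "subderiv P [NT S] z s B0 w0 t0"
    and "K < length w0" and short: "length w0 \<le> max_rhs P * K"
    using medium_subtree[OF assms(1) \<open>1 \<le> K\<close> gen_z] by blast
  moreover have "gen P [NT B0] w0 t0"
    using top unfolding subderiv_def by blast
  ultimately have "(\<exists>B\<in>{}. \<exists>w t. subderiv P [NT B0] w0 t0 B w t) \<or>
      (\<exists>B w t w' t'. subderiv P [NT B0] w0 t0 B w t \<and> subderiv P [NT B] w t B w' t' \<and> t' < t)"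
    by (intro repetition[OF assms(1)]) (simp_all add: K_def)
  then obtain B w t w' t' where
    mid: "subderiv P [NT B0] w0 t0 B w t" and rep: "subderiv P [NT B] w t B w' t'" "t' < t"
    by blast
  obtain u v x y s' where z: "z = u @ v @ w' @ x @ y" and w: "w = v @ w' @ x"
    and pumped: "gen P [NT S] (u @ w' @ y) s'" "s' < s"
    using subderiv_excise[OF subderiv_trans[OF top mid] rep] by blast
  have "v @ x \<noteq> []"
  proof
    assume "v @ x = []"
    with z have "u @ w' @ y = z"
      by simp
    with pumped minimal show False
      by blast
  qed
  moreover have "length (v @ w' @ x) \<le> max_rhs P ^ Suc (card (fst ` P))"
    using w short subderiv_le[OF mid] unfolding K_def by simp
  ultimately show ?thesis
    using z pumped(1) by (intro exI[of _ u] exI[of _ v] exI[of _ w'] exI[of _ x] exI[of _ y] exI[of _ s']) simp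
qed

theorem pumping_lemma:
  assumes "finite P"
  shows "\<exists>k. \<forall>z \<in> Lang P S. k < length z \<longrightarrow>
    (\<exists>u v w x y. z = u @ v @ w @ x @ y \<and> length (v @ w @ x) \<le> k \<and> v @ x \<noteq> [] \<and>
      u @ w @ y \<in> Lang P S)"
proof (intro exI[of _ "max_rhs P ^ Suc (card (fst ` P))"] ballI impI)
  fix z
  assume "z \<in> Lang P S" and long: "max_rhs P ^ Suc (card (fst ` P)) < length z"
  then obtain s where gen_z: "gen P [NT S] z s" and minimal: "\<And>s'. s' < s \<Longrightarrow> \<not> gen P [NT S] z s'"
    unfolding Lang_gen using exists_least_iff[of "gen P [NT S] z"] by blast
  obtain u v w x y s' where
    "z = u @ v @ w @ x @ y" "v @ x \<noteq> []" "length (v @ w @ x) \<le> max_rhs P ^ Suc (card (fst ` P))"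
    "gen P [NT S] (u @ w @ y) s'"
    using pumping_decomposition[OF assms gen_z minimal long] by blast
  then show "\<exists>u v w x y. z = u @ v @ w @ x @ y \<and>
      length (v @ w @ x) \<le> max_rhs P ^ Suc (card (fst ` P)) \<and> v @ x \<noteq> [] \<and>
      u @ w @ y \<in> Lang P S"
    unfolding Lang_gen by blast
qed

lemma length_perfect_shuffle:
  "length x = length y \<Longrightarrow> length (perfect_shuffle x y) = 2 * length x"
  by (induction x y rule: list_induct2) auto

lemma nth_perfect_shuffle:
  "length x = length y \<Longrightarrow> j < length x \<Longrightarrow>
   perfect_shuffle x y ! (2 * j) = x ! j \<and> perfect_shuffle x y ! (2 * j + 1) = y ! j"
proof (induction x y arbitrary: j rule: list_induct2)
  case (Cons a x b y)
  then show ?case by (cases j) auto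
qed simp

lemma rev_perfect_shuffle:
  "length x = length y \<Longrightarrow> rev (perfect_shuffle x y) = perfect_shuffle (rev y) (rev x)"
proof (induction x y rule: list_induct2)
  case (Cons a x b y)
  have "perfect_shuffle (xs @ [p]) (ys @ [q]) = perfect_shuffle xs ys @ [p, q]"
    if "length xs = length ys" for xs ys :: "'a list" and p q
    using that by (induction xs ys rule: list_induct2) auto
  with Cons show ?case by simp
qed simp

lemma count_perfect_shuffle:
  "length x = length y \<Longrightarrow> count_list (perfect_shuffle x y) c = count_list x c + count_list y c"
  by (induction x y rule: list_induct2) auto

lemma count_list_replicate: "count_list (replicate n a) c = (if a = c then n else 0)"
  by (induction n) auto

lemma pssr_palindrome: "z \<in> pssr L \<Longrightarrow> rev z = z"
  unfolding pssr_def by (auto simp: rev_perfect_shuffle)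

lemma pssr_L7_balanced:
  assumes "z \<in> pssr L7"
  shows "count_list z 0 = count_list z 1 \<and> count_list z 2 = count_list z 3"
proof -
  from assms obtain m n where
    "z = perfect_shuffle (replicate m 0 @ replicate m 1 @ replicate n 2 @ replicate n 3)
           (rev (replicate m 0 @ replicate m 1 @ replicate n 2 @ replicate n 3))"
    unfolding pssr_def L7_def by blast
  then show ?thesis
    by (simp add: count_perfect_shuffle count_list_replicate)
qed

(* If z = u v w x y and the pumped-down word u w y are both palindromes, then
   z_i = z_(i + |v x|) for all |u w| <= i < |y|: reading z backwards, its suffix y
   is read twice, once inside z and once inside u w y. *)
lemma palindrome_shift:
  assumes "rev z = z" and z: "z = u @ v @ w @ x @ y" and "rev (u @ w @ y) = u @ w @ y"
    and "length u + length w \<le> i" and "i < length y"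
  shows "z ! i = z ! (i + length (v @ x))"
proof -
  have "z ! i = rev z ! i"
    using assms(1) by simp
  also have "\<dots> = rev y ! i"
    using assms(5) z by (simp add: nth_append)
  also have "\<dots> = rev (u @ w @ y) ! i"
    using assms(5) by (simp add: nth_append)
  also have "\<dots> = ((u @ w) @ y) ! (length (u @ w) + (i - length u - length w))"
    using assms(3,4) by simp
  also have "\<dots> = ((u @ v @ w @ x) @ y) ! (length (u @ v @ w @ x) + (i - length u - length w))"
    by (simp only: nth_append_length_plus)
  also have "\<dots> = z ! (i + length (v @ x))"
    using assms(4) z by (simp add: ac_simps)
  finally show ?thesis .
qed

lemma window_values:
  assumes z: "z = u @ v @ w @ x @ y"
    and window: "\<And>i. length u \<le> i \<Longrightarrow> i < length (u @ v @ w @ x) \<Longrightarrow> z ! i \<in> S"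
  shows "set (v @ x) \<subseteq> S"
proof
  fix c
  assume "c \<in> set (v @ x)"
  then consider j where "j < length v" "c = v ! j" | j where "j < length x" "c = x ! j"
    by (auto simp: in_set_conv_nth)
  then show "c \<in> S"
  proof cases
    case 1
    with window[of "length u + j"] z show ?thesis by (simp add: nth_append)
  next
    case 2
    with window[of "length u + length v + length w + j"] z show ?thesis by (simp add: nth_append)
  qed
qed

lemma balanced_two_letters_empty:
  fixes l :: "nat list"
  assumes "count_list l 0 = count_list l 1" and "count_list l 2 = count_list l 3"
    and "set l \<subseteq> {0, 3} \<or> set l \<subseteq> {1, 2}"
  shows "l = []"
proof (rule ccontr)
  from assms(3) have
    "count_list l 1 = 0 \<and> count_list l 2 = 0 \<or> count_list l 0 = 0 \<and> count_list l 3 = 0"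
    by (auto simp: count_list_0_iff)
  with assms(1,2) have absent: "c \<notin> set l" if "c \<in> {0, 1, 2, 3}" for c
    using that by (auto simp: count_list_0_iff[symmetric])
  assume "l \<noteq> []"
  then obtain c where "c \<in> set l"
    by (cases l) auto
  with assms(3) absent show False
    by blast
qed

lemma div_eq_iff_bounds:
  fixes j N q :: nat
  assumes "0 < N"
  shows "j div N = q \<longleftrightarrow> N * q \<le> j \<and> j < N * Suc q"
  using assms div_nat_eqI[of N q j] dividend_less_div_times[of N j] div_times_less_eq_dividend[of j N]
  by (auto simp: mult.commute)

(* Its outer quarters alternate 0 and 3, its middle half
   is (12)^N (21)^N: the phase of the alternation flips at the centre 4N. *)
definition blocks :: "nat \<Rightarrow> nat list" where
  "blocks N = replicate N 0 @ replicate N 1 @ replicate N 2 @ replicate N 3"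

definition witness :: "nat \<Rightarrow> nat list" where
  "witness N = perfect_shuffle (blocks N) (rev (blocks N))"

lemma nth_blocks: "j < 4 * N \<Longrightarrow> blocks N ! j = j div N"
  by (auto simp: blocks_def nth_append le_div_geq)

lemma length_witness: "length (witness N) = 8 * N"
  by (simp add: witness_def length_perfect_shuffle blocks_def)

lemma nth_witness:
  assumes "i < 8 * N"
  shows "witness N ! i = (if even i then i div 2 div N else (4 * N - 1 - i div 2) div N)"
proof -
  have "length (blocks N) = 4 * N" by (simp add: blocks_def)
  moreover have "i div 2 < 4 * N" using assms by simp
  ultimately have "witness N ! (2 * (i div 2)) = blocks N ! (i div 2)"
    and "witness N ! (2 * (i div 2) + 1) = rev (blocks N) ! (i div 2)"
    using nth_perfect_shuffle[of "blocks N" "rev (blocks N)" "i div 2"] by (simp_all add: witness_def)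
  with \<open>i div 2 < 4 * N\<close> \<open>length (blocks N) = 4 * N\<close> show ?thesis
    by (cases "even i") (auto simp: rev_nth nth_blocks elim: oddE)
qed

lemma witness_in_pssr: "1 \<le> N \<Longrightarrow> witness N \<in> pssr L7"
  unfolding pssr_def L7_def witness_def blocks_def by blast

lemma witness_palindrome: "rev (witness N) = witness N"
  by (simp add: witness_def rev_perfect_shuffle blocks_def)

lemma count_witness: "c \<le> 3 \<Longrightarrow> count_list (witness N) c = 2 * N"
  by (auto simp: witness_def blocks_def count_perfect_shuffle count_list_replicate)

lemma witness_outer:
  "i < 2 * N \<or> 6 * N \<le> i \<and> i < 8 * N \<Longrightarrow> witness N ! i \<in> {0, 3}"
  by (auto simp: nth_witness div_eq_iff_bounds)

lemma witness_inner:
  "2 * N \<le> i \<and> i < 6 * N \<Longrightarrow> witness N ! i \<in> {1, 2}"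
  by (auto simp: nth_witness div_eq_iff_bounds)

lemma witness_centre:
  "1 \<le> N \<Longrightarrow> witness N ! (4 * N - 1) = 2 \<and> witness N ! (4 * N) = 2"
  by (auto simp: nth_witness div_eq_iff_bounds)

lemma witness_after_centre:
  "odd p \<Longrightarrow> 4 * N < p \<Longrightarrow> p < 6 * N \<Longrightarrow> witness N ! p = 1"
  by (auto simp: nth_witness div_eq_iff_bounds)

(* Pumping down across the boundary 2N is impossible: the periodicity forced by
   palindrome_shift (period r = |v x|, 0 < r < N) would relate the letter 2 just at
   the centre to a letter 1 just after it. *)
lemma pump_across_boundary:
  assumes z: "witness N = u @ v @ w @ x @ y" and pal: "rev (u @ w @ y) = u @ w @ y"
    and short: "length (v @ w @ x) < N" and nonempty: "v @ x \<noteq> []"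
    and across: "length u < 2 * N" "2 * N < length (u @ v @ w @ x)"
  shows False
proof -
  define r where "r = length (v @ x)"
  have "1 \<le> r" "r < N"
    using nonempty short unfolding r_def by (auto simp: Suc_le_eq)
  define i where "i = (if even r then 4 * N - 1 else 4 * N)"
  have "length (u @ v @ w @ x @ y) = 8 * N"
    using z length_witness[of N] by simp
  with short across have "length u + length w \<le> i" "i < length y"
    unfolding i_def by auto
  with z pal have "witness N ! i = witness N ! (i + r)"
    unfolding r_def by (intro palindrome_shift[OF witness_palindrome])
  moreover have "witness N ! i = 2"
    using witness_centre[of N] \<open>r < N\<close> unfolding i_def by simp
  moreover have "odd (i + r)" "4 * N < i + r" "i + r < 6 * N"
    using \<open>1 \<le> r\<close> \<open>r < N\<close> unfolding i_def by (auto elim: evenE)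
  then have "witness N ! (i + r) = 1"
    by (rule witness_after_centre)
  ultimately show False
    by simp
qed

(* No admissible pumping-down of the witness stays in pssr(L7): a window inside one
   region removes letters from {0,3} or {1,2} only and unbalances the counts; a window
   across 2N contradicts periodicity, and across 6N likewise after reversal. *)
lemma pumped_witness_not_in_pssr:
  assumes z: "witness N = u @ v @ w @ x @ y" and short: "length (v @ w @ x) < N"
    and nonempty: "v @ x \<noteq> []"
  shows "u @ w @ y \<notin> pssr L7"
proof
  assume pumped: "u @ w @ y \<in> pssr L7"
  have pal: "rev (u @ w @ y) = u @ w @ y"
    using pssr_palindrome[OF pumped] .
  have len: "length (u @ v @ w @ x @ y) = 8 * N"
    using z length_witness[of N] by simp
  have counts: "count_list (u @ w @ y) c + count_list (v @ x) c = 2 * N" if "c \<le> 3" for c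
    using count_witness[OF that, of N] z by simp
  have "count_list (v @ x) 0 = count_list (v @ x) 1" "count_list (v @ x) 2 = count_list (v @ x) 3"
    using counts[of 0] counts[of 1] counts[of 2] counts[of 3] pssr_L7_balanced[OF pumped] by simp_all
  with nonempty balanced_two_letters_empty
  have not_two_letters: "\<not> (set (v @ x) \<subseteq> {0, 3} \<or> set (v @ x) \<subseteq> {1, 2})"
    by blast
  consider "length (u @ v @ w @ x) \<le> 2 * N \<or> 6 * N \<le> length u"
    | "2 * N \<le> length u \<and> length (u @ v @ w @ x) \<le> 6 * N"
    | "length u < 2 * N \<and> 2 * N < length (u @ v @ w @ x)"
    | "length u < 6 * N \<and> 6 * N < length (u @ v @ w @ x)"
    using short unfolding length_append by linarith
  then show False
  proof cases
    case 1
    with len have "set (v @ x) \<subseteq> {0, 3}"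
      by (intro window_values[OF z] witness_outer) auto
    with not_two_letters show False by blast
  next
    case 2
    then have "set (v @ x) \<subseteq> {1, 2}"
      by (intro window_values[OF z] witness_inner) auto
    with not_two_letters show False by blast
  next
    case 3
    with z pal short nonempty show False
      by (intro pump_across_boundary) auto
  next
    case 4
    have "witness N = rev y @ rev x @ rev w @ rev v @ rev u"
      using witness_palindrome[of N] z by (metis rev_append append.assoc)
    moreover have "rev (rev y @ rev w @ rev u) = rev y @ rev w @ rev u"
      using pal by (metis rev_append append.assoc)
    moreover note 4 len short nonempty
    ultimately show False
      by (intro pump_across_boundary[of N "rev y" "rev x" "rev w" "rev v" "rev u"]) auto
  qed
qed

lemma nested_sound:
  assumes rules: "\<And>\<gamma>. (A, \<gamma>) \<in> P \<Longrightarrow> \<gamma> = [Tm a, NT A, Tm b] \<or> \<gamma> = [Tm a, Tm b]"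
  shows "gen P [NT A] z s \<Longrightarrow> \<exists>m \<ge> 1. z = replicate m a @ replicate m b"
proof (induction s arbitrary: z rule: less_induct)
  case (less s)
  then obtain \<gamma> s1 where "(A, \<gamma>) \<in> P" "gen P \<gamma> z s1" "s = Suc s1"
    by (auto simp: gen_single)
  with rules consider "gen P [Tm a, Tm b] z s1" | "gen P [Tm a, NT A, Tm b] z s1"
    by blast
  then show ?case
  proof cases
    case 1
    then show ?thesis by (intro exI[of _ 1]) auto
  next
    case 2
    then obtain w where "z = a # w" and "gen P ([NT A] @ [Tm b]) w s1"
      by auto
    moreover from gen_append_elim[OF this(2)] obtain w1 w2 t1 t2 where
      "gen P [NT A] w1 t1" "gen P [Tm b] w2 t2" "w = w1 @ w2" "s1 = t1 + t2"
      by blast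
    ultimately have "z = a # w1 @ [b]" and "gen P [NT A] w1 t1" and "t1 \<le> s1"
      by auto
    moreover from this less.IH \<open>s = Suc s1\<close> obtain m where "m \<ge> 1" "w1 = replicate m a @ replicate m b"
      by (meson le_imp_less_Suc)
    ultimately show ?thesis
      by (intro exI[of _ "Suc m"]) (simp add: replicate_append_same)
  qed
qed

lemma nested_complete:
  assumes "(A, [Tm a, NT A, Tm b]) \<in> P" and "(A, [Tm a, Tm b]) \<in> P"
  shows "m \<ge> 1 \<Longrightarrow> \<exists>s. gen P [NT A] (replicate m a @ replicate m b) s"
proof (induction m rule: nat_induct_at_least)
  case base
  have "gen P [Tm a, Tm b] [a, b] 0"
    by simp
  from gen.nt[OF assms(2) this gen.nil] show ?case
    by auto
next
  case (Suc m)
  then obtain s where "gen P [NT A] (replicate m a @ replicate m b) s"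
    by blast
  moreover have "gen P [Tm b] [b] 0"
    by simp
  ultimately have "gen P ([NT A] @ [Tm b]) ((replicate m a @ replicate m b) @ [b]) (s + 0)"
    by (rule gen_append_intro)
  then have "gen P [Tm a, NT A, Tm b] (a # replicate m a @ replicate m b @ [b]) s"
    by simp
  from gen.nt[OF assms(1) this gen.nil] show ?case
    by (auto simp: replicate_append_same)
qed

definition P7 :: "(nat, nat) prods" where
  "P7 = {(0, [NT 1, NT 2]), (1, [Tm 0, NT 1, Tm 1]), (1, [Tm 0, Tm 1]),
         (2, [Tm 2, NT 2, Tm 3]), (2, [Tm 2, Tm 3])}"

lemma Lang_P7: "Lang P7 0 = L7"
proof -
  have start: "(\<exists>s. gen P7 [NT 0] z s) \<longleftrightarrow>
      (\<exists>z1 z2. (\<exists>s. gen P7 [NT 1] z1 s) \<and> (\<exists>s. gen P7 [NT 2] z2 s) \<and> z = z1 @ z2)" for z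
  proof
    assume "\<exists>s. gen P7 [NT 0] z s"
    then obtain s where "gen P7 ([NT 1] @ [NT 2]) z s"
      by (auto simp: gen_single P7_def)
    then show "\<exists>z1 z2. (\<exists>s. gen P7 [NT 1] z1 s) \<and> (\<exists>s. gen P7 [NT 2] z2 s) \<and> z = z1 @ z2"
      by (blast dest: gen_append_elim)
  next
    assume "\<exists>z1 z2. (\<exists>s. gen P7 [NT 1] z1 s) \<and> (\<exists>s. gen P7 [NT 2] z2 s) \<and> z = z1 @ z2"
    then obtain z1 z2 s1 s2 where "gen P7 [NT 1] z1 s1" "gen P7 [NT 2] z2 s2" "z = z1 @ z2"
      by blast
    then have "gen P7 [NT 1, NT 2] z (s1 + s2)"
      using gen_append_intro[of P7 "[NT 1]" z1 s1 "[NT 2]" z2 s2] by simp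
    from gen.nt[OF _ this gen.nil] show "\<exists>s. gen P7 [NT 0] z s"
      by (auto simp: P7_def)
  qed
  have ones: "(\<exists>s. gen P7 [NT 1] z s) \<longleftrightarrow> (\<exists>m \<ge> 1. z = replicate m 0 @ replicate m 1)" for z
    using nested_sound[of 1 P7 0 1] nested_complete[of 1 0 1 P7] by (auto simp: P7_def)
  have twos: "(\<exists>s. gen P7 [NT 2] z s) \<longleftrightarrow> (\<exists>n \<ge> 1. z = replicate n 2 @ replicate n 3)" for z
    using nested_sound[of 2 P7 2 3] nested_complete[of 2 2 3 P7] by (auto simp: P7_def)
  show ?thesis
  proof (intro set_eqI iffI)
    fix z
    assume "z \<in> Lang P7 0"
    then obtain m n where "m \<ge> 1" "n \<ge> 1"
      "z = (replicate m 0 @ replicate m 1) @ (replicate n 2 @ replicate n 3)"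
      unfolding Lang_gen mem_Collect_eq start ones twos by blast
    then show "z \<in> L7"
      unfolding L7_def by auto
  next
    fix z
    assume "z \<in> L7"
    then obtain m n where "m \<ge> 1" "n \<ge> 1"
      "z = (replicate m 0 @ replicate m 1) @ (replicate n 2 @ replicate n 3)"
      unfolding L7_def by auto
    then show "z \<in> Lang P7 0"
      unfolding Lang_gen mem_Collect_eq start ones twos by blast
  qed
qed

lemma CFL_L7: "CFL L7"
  unfolding CFL_def using Lang_P7 by (intro exI[of _ P7] exI[of _ 0]) (simp add: P7_def)

lemma not_CFL_pssr_L7: "\<not> CFL (pssr L7)"
proof
  assume "CFL (pssr L7)"
  then obtain P :: "(nat, nat) prods" and S where "finite P" and L: "pssr L7 = Lang P S"
    unfolding CFL_def by blast
  from pumping_lemma[OF \<open>finite P\<close>, of S] obtain k where pump: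
    "\<forall>z \<in> Lang P S. k < length z \<longrightarrow>
      (\<exists>u v w x y. z = u @ v @ w @ x @ y \<and> length (v @ w @ x) \<le> k \<and> v @ x \<noteq> [] \<and>
        u @ w @ y \<in> Lang P S)"
    by blast
  define N where "N = Suc k"
  have "witness N \<in> Lang P S" and "k < length (witness N)"
    using witness_in_pssr[of N] L length_witness[of N] unfolding N_def by auto
  with pump obtain u v w x y where "witness N = u @ v @ w @ x @ y" "length (v @ w @ x) < N"
    "v @ x \<noteq> []" "u @ w @ y \<in> pssr L7"
    unfolding L N_def by fastforce
  then show False
    using pumped_witness_not_in_pssr by blast
qed

theorem mainTheorem7:
  shows "CFL L7 \<and> \<not> CFL (pssr L7)"
  using CFL_L7 not_CFL_pssr_L7 by blast

end
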